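(* Let $n,m\in\mathbb{N}$ and suppose: (A1) $X_1,\ldots,X_n,Y_1,\ldots,Y_m$ are GTAI; $\Theta_1,\ldots,\Theta_n,\Delta_1,\ldots,\Delta_m$ are non-negative, non-degenerate at zero, arbitrarily dependent random variables with distributions whose supports are bounded from above, and $(\Theta_1,\ldots,\Theta_n,\Delta_1,\ldots,\Delta_m)$ is independent of $(X_1,\ldots,X_n,Y_1,\ldots,Y_m)$; (A2) $X_i$ has distribution $F_i\in\mathcal{D}\cap\mathcal{L}$ and $Y_j$ has distribution $G_j\in\mathcal{D}\cap\mathcal{L}$ for all $i,j$; for each $i\le n\wedge m$ the pair $(X_i,Y_i)$ is SAI with some constant $C_i>0$; and $X_i$, $Y_j$ are independent whenever $i\neq j$. Let $a:[0,\infty)\to(0,\infty)$ satisfy $a(x)\to\infty$ and $a(x)=o(x)$ as $x\to\infty$. Then for every $1\le i\neq k\le n$ and every $j=1,\ldots,m$, $$\mathbb{P}(\Theta_iX_i>x,\;\Delta_jY_j>y,\;\Theta_k|X_k|>a(x))=o\big(\mathbb{P}(\Theta_iX_i>x,\;\Delta_jY_j>y)\big),\qquad x\wedge y\to\infty.$$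
   Context: All distributions considered have infinite right endpoint: $\overline V(x)=1-V(x)>0$ for all $x$. A distribution $V$ belongs to $\mathcal{D}$ (dominated variation) if $\limsup_{x\to\infty}\overline V(tx)/\overline V(x)<\infty$ for some (equivalently all) $t\in(0,1)$; it belongs to $\mathcal{L}$ (long tail) if $\lim_{x\to\infty}\overline V(x-a)/\overline V(x)=1$ for all $a>0$. SAI (strong asymptotic independence): real random variables $X,Y$ with distributions $F,G$ are SAI with constant $C>0$ if, as $x\wedge y\to\infty$, $\mathbb{P}(X^->x,Y>y)=O(F(-x)\overline G(y))$, $\mathbb{P}(X>x,Y^->y)=O(\overline F(x)G(-y))$ and $\mathbb{P}(X>x,Y>y)\sim C\,\overline F(x)\overline G(y)$, where $z^-=\max\{-z,0\}$. GTAI: real random variables $X_1,\ldots,X_n,Y_1,\ldots,Y_m$ with supports unbounded above are GTAI if $\lim_{x_i\wedge x_k\wedge y_j\to\infty}\mathbb{P}(|X_i|>x_i\mid X_k>x_k,Y_j>y_j)=0$ for all $1\le i\neq k\le n$, $1\le j\le m$, and $\lim_{x_i\wedge y_j\wedge y_k\to\infty}\mathbb{P}(|Y_j|>y_j\mid X_i>x_i,Y_k>y_k)=0$ for all $1\le j\neq k\le m$, $1\le i\le n$. For bivariate positive functions, $f=o(g)$ as $x\wedge y\to\infty$ means $f(x,y)/g(x,y)\to0$ as $\min\{x,y\}\to\infty$. *)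

theory Defs
  imports "HOL-Probability.Probability" "HOL-Library.Landau_Symbols"
begin

definition rtail :: "real measure \<Rightarrow> real \<Rightarrow> real" where
  "rtail V x = measure V {x<..}"

definition cdf_at :: "real measure \<Rightarrow> real \<Rightarrow> real" where
  "cdf_at V x = measure V {..x}"

definition inf_right_endpoint :: "real measure \<Rightarrow> bool" where
  "inf_right_endpoint V \<longleftrightarrow> (\<forall>x. rtail V x > 0)"

definition dominated_variation :: "real measure \<Rightarrow> bool" where
  "dominated_variation V \<longleftrightarrow>
     (\<exists>t\<in>{0<..<1}. Limsup at_top (\<lambda>x. ereal (rtail V (t * x) / rtail V x)) < \<infinity>)"

definition long_tailed :: "real measure \<Rightarrow> bool" where
  "long_tailed V \<longleftrightarrow> (\<forall>a>0. ((\<lambda>x. rtail V (x - a) / rtail V x) \<longlongrightarrow> 1) at_top)"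

definition SAI :: "'a measure \<Rightarrow> ('a \<Rightarrow> real) \<Rightarrow> ('a \<Rightarrow> real) \<Rightarrow> real \<Rightarrow> bool" where
  "SAI M X Y C \<longleftrightarrow> C > 0 \<and>
     (\<lambda>(x,y). measure M {\<omega>\<in>space M. max (- X \<omega>) 0 > x \<and> Y \<omega> > y})
        \<in> O[at_top \<times>\<^sub>F at_top](\<lambda>(x,y). cdf_at (distr M borel X) (- x) * rtail (distr M borel Y) y) \<and>
     (\<lambda>(x,y). measure M {\<omega>\<in>space M. X \<omega> > x \<and> max (- Y \<omega>) 0 > y})
        \<in> O[at_top \<times>\<^sub>F at_top](\<lambda>(x,y). rtail (distr M borel X) x * cdf_at (distr M borel Y) (- y)) \<and>
     (\<lambda>(x,y). measure M {\<omega>\<in>space M. X \<omega> > x \<and> Y \<omega> > y})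
        \<sim>[at_top \<times>\<^sub>F at_top] (\<lambda>(x,y). C * rtail (distr M borel X) x * rtail (distr M borel Y) y)"

definition cprob :: "'a measure \<Rightarrow> 'a set \<Rightarrow> 'a set \<Rightarrow> real" where
  "cprob M A B = measure M (A \<inter> B) / measure M B"

definition GTAI :: "'a measure \<Rightarrow> nat \<Rightarrow> (nat \<Rightarrow> 'a \<Rightarrow> real) \<Rightarrow> nat \<Rightarrow> (nat \<Rightarrow> 'a \<Rightarrow> real) \<Rightarrow> bool" where
  "GTAI M n X m Y \<longleftrightarrow>
     (\<forall>i\<in>{1..n}. \<forall>x. measure M {\<omega>\<in>space M. X i \<omega> > x} > 0) \<and>
     (\<forall>j\<in>{1..m}. \<forall>y. measure M {\<omega>\<in>space M. Y j \<omega> > y} > 0) \<and>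
     (\<forall>i\<in>{1..n}. \<forall>k\<in>{1..n}. \<forall>j\<in>{1..m}. i \<noteq> k \<longrightarrow>
        ((\<lambda>(xi, xk, yj). cprob M {\<omega>\<in>space M. \<bar>X i \<omega>\<bar> > xi}
                                   {\<omega>\<in>space M. X k \<omega> > xk \<and> Y j \<omega> > yj})
          \<longlongrightarrow> 0) (at_top \<times>\<^sub>F at_top \<times>\<^sub>F at_top)) \<and>
     (\<forall>j\<in>{1..m}. \<forall>k\<in>{1..m}. \<forall>i\<in>{1..n}. j \<noteq> k \<longrightarrow>
        ((\<lambda>(yj, xi, yk). cprob M {\<omega>\<in>space M. \<bar>Y j \<omega>\<bar> > yj}
                                   {\<omega>\<in>space M. X i \<omega> > xi \<and> Y k \<omega> > yk})
          \<longlongrightarrow> 0) (at_top \<times>\<^sub>F at_top \<times>\<^sub>F at_top))"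

end

theory Submission
  imports Defs
begin

text \<open>
  Condition on the scales \<open>(\<Theta>\<^sub>i, \<Delta>\<^sub>j, \<Theta>\<^sub>k) = (t\<^sub>1, t\<^sub>2, t\<^sub>3)\<close>, which are independent of
  \<open>(X\<^sub>i, Y\<^sub>j, X\<^sub>k)\<close> and almost surely bounded by some \<open>B > 0\<close>. For positive \<open>t\<^sub>1, t\<^sub>2\<close> the event
  is contained in \<open>{X\<^sub>i > x/t\<^sub>1, Y\<^sub>j > y/t\<^sub>2, \<bar>X\<^sub>k\<bar> > a(x)/B}\<close>, whose thresholds all exceed \<open>x/B\<close>,
  \<open>y/B\<close> or \<open>a(x)/B\<close>. By GTAI its probability is at most \<open>\<epsilon> P(X\<^sub>i > x/t\<^sub>1, Y\<^sub>j > y/t\<^sub>2)\<close> once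
  \<open>x\<close>, \<open>y\<close> and \<open>a(x)\<close> are large, and integrating over the law of the scales gives
  \<open>\<epsilon> P(\<Theta>\<^sub>iX\<^sub>i > x, \<Delta>\<^sub>jY\<^sub>j > y)\<close>. Only GTAI, the boundedness and nonnegativity of the scales, their
  independence from the \<open>X\<close>'s and \<open>Y\<close>'s, and \<open>a(x) \<rightarrow> \<infinity>\<close> are needed; the tail classes, SAI,
  non-degeneracy and \<open>a(x) = o(x)\<close> are not.
\<close>

lemma (in prob_space) emeasure_indep_var_Pair_eq_nn_integral:
  assumes ind: "indep_var MT T MZ Z" and E: "E \<in> sets (MT \<Otimes>\<^sub>M MZ)"
  shows "emeasure M {\<omega>\<in>space M. (T \<omega>, Z \<omega>) \<in> E}
    = (\<integral>\<^sup>+t. emeasure M {\<omega>\<in>space M. (t, Z \<omega>) \<in> E} \<partial>distr M MT T)"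
proof -
  have T[measurable]: "random_variable MT T" and Z[measurable]: "random_variable MZ Z"
    and joint: "distr M MT T \<Otimes>\<^sub>M distr M MZ Z = distr M (MT \<Otimes>\<^sub>M MZ) (\<lambda>\<omega>. (T \<omega>, Z \<omega>))"
    using ind unfolding indep_var_distribution_eq by auto
  interpret PZ: prob_space "distr M MZ Z" by (rule prob_space_distr) simp
  have "emeasure M {\<omega>\<in>space M. (T \<omega>, Z \<omega>) \<in> E} = emeasure (distr M MT T \<Otimes>\<^sub>M distr M MZ Z) E"
    unfolding joint using E by (subst emeasure_distr) (auto intro!: arg_cong[where f="emeasure M"])
  also have "\<dots> = (\<integral>\<^sup>+t. emeasure (distr M MZ Z) (Pair t -` E) \<partial>distr M MT T)"
    using E by (intro PZ.emeasure_pair_measure_alt) simp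
  also have "\<dots> = (\<integral>\<^sup>+t. emeasure M {\<omega>\<in>space M. (t, Z \<omega>) \<in> E} \<partial>distr M MT T)"
    using E by (intro nn_integral_cong) (auto simp: emeasure_distr intro!: arg_cong[where f="emeasure M"])
  finally show ?thesis .
qed

lemma (in prob_space) indep_var_measure_le_cmult:
  assumes ind: "indep_var MT T MZ Z" and E: "E \<in> sets (MT \<Otimes>\<^sub>M MZ)" and F: "F \<in> sets (MT \<Otimes>\<^sub>M MZ)"
    and c: "0 \<le> c"
    and section_le: "AE t in distr M MT T.
      prob {\<omega>\<in>space M. (t, Z \<omega>) \<in> F} \<le> c * prob {\<omega>\<in>space M. (t, Z \<omega>) \<in> E}"
  shows "prob {\<omega>\<in>space M. (T \<omega>, Z \<omega>) \<in> F} \<le> c * prob {\<omega>\<in>space M. (T \<omega>, Z \<omega>) \<in> E}"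
proof -
  have "emeasure M {\<omega>\<in>space M. (T \<omega>, Z \<omega>) \<in> F}
      = (\<integral>\<^sup>+t. emeasure M {\<omega>\<in>space M. (t, Z \<omega>) \<in> F} \<partial>distr M MT T)"
    by (rule emeasure_indep_var_Pair_eq_nn_integral[OF ind F])
  also have "\<dots> \<le> (\<integral>\<^sup>+t. c * emeasure M {\<omega>\<in>space M. (t, Z \<omega>) \<in> E} \<partial>distr M MT T)"
    using section_le c
    by (intro nn_integral_mono_AE) (auto simp: emeasure_eq_measure ennreal_mult[symmetric])
  also have "\<dots> = c * (\<integral>\<^sup>+t. emeasure M {\<omega>\<in>space M. (t, Z \<omega>) \<in> E} \<partial>distr M MT T)"
  proof (rule nn_integral_cmult)
    have [measurable]: "random_variable MZ Z"
      using ind unfolding indep_var_distribution_eq by simp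
    show "(\<lambda>t. emeasure M {\<omega>\<in>space M. (t, Z \<omega>) \<in> E}) \<in> borel_measurable (distr M MT T)"
      using E by measurable
  qed
  also have "\<dots> = c * emeasure M {\<omega>\<in>space M. (T \<omega>, Z \<omega>) \<in> E}"
    by (simp add: emeasure_indep_var_Pair_eq_nn_integral[OF ind E])
  finally show ?thesis
    using c by (simp add: emeasure_eq_measure ennreal_mult[symmetric])
qed

lemma (in prob_space) fixed_scale_tail_le:
  fixes Z1 Z2 Z3 :: "'a \<Rightarrow> real"
  assumes [measurable]: "Z1 \<in> borel_measurable M" "Z2 \<in> borel_measurable M" "Z3 \<in> borel_measurable M"
    and tail_le: "\<And>v w. N \<le> v \<Longrightarrow> N \<le> w \<Longrightarrow>
      prob {\<omega>\<in>space M. Z1 \<omega> > v \<and> Z2 \<omega> > w \<and> \<bar>Z3 \<omega>\<bar> > u}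
        \<le> c * prob {\<omega>\<in>space M. Z1 \<omega> > v \<and> Z2 \<omega> > w}"
    and B: "0 < B" and c: "0 \<le> c"
    and t: "0 \<le> t1" "t1 \<le> B" "0 \<le> t2" "t2 \<le> B" "t3 \<le> B"
    and x: "N * B \<le> x" "0 < x" and y: "N * B \<le> y" "0 < y" and z: "B * u \<le> z"
  shows "prob {\<omega>\<in>space M. t1 * Z1 \<omega> > x \<and> t2 * Z2 \<omega> > y \<and> t3 * \<bar>Z3 \<omega>\<bar> > z}
    \<le> c * prob {\<omega>\<in>space M. t1 * Z1 \<omega> > x \<and> t2 * Z2 \<omega> > y}"
proof (cases "t1 = 0 \<or> t2 = 0")
  case True
  then show ?thesis using x y c by auto
next
  case False
  with t have pos: "0 < t1" "0 < t2" by auto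
  have below_quotient: "N \<le> s / r" if "0 < r" "r \<le> B" "N * B \<le> s" "0 < s" for r s
  proof -
    have "N * r \<le> N * B \<or> N * r \<le> 0"
      using that by (cases "0 \<le> N") (auto intro: mult_left_mono mult_nonpos_nonneg)
    then show ?thesis
      using that by (auto simp: pos_le_divide_eq)
  qed
  have "N \<le> x / t1" "N \<le> y / t2"
    using below_quotient pos t x y by auto
  then have "prob {\<omega>\<in>space M. Z1 \<omega> > x / t1 \<and> Z2 \<omega> > y / t2 \<and> \<bar>Z3 \<omega>\<bar> > u}
      \<le> c * prob {\<omega>\<in>space M. Z1 \<omega> > x / t1 \<and> Z2 \<omega> > y / t2}"
    by (rule tail_le)
  moreover have "prob {\<omega>\<in>space M. t1 * Z1 \<omega> > x \<and> t2 * Z2 \<omega> > y \<and> t3 * \<bar>Z3 \<omega>\<bar> > z}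
      \<le> prob {\<omega>\<in>space M. Z1 \<omega> > x / t1 \<and> Z2 \<omega> > y / t2 \<and> \<bar>Z3 \<omega>\<bar> > u}"
  proof (rule finite_measure_mono)
    have "\<bar>r\<bar> > u" if "t3 * \<bar>r\<bar> > z" for r
    proof -
      have "B * u < B * \<bar>r\<bar>"
        using that z mult_right_mono[OF t(5) abs_ge_zero[of r]] by linarith
      then show ?thesis using B by simp
    qed
    then show "{\<omega>\<in>space M. t1 * Z1 \<omega> > x \<and> t2 * Z2 \<omega> > y \<and> t3 * \<bar>Z3 \<omega>\<bar> > z}
        \<subseteq> {\<omega>\<in>space M. Z1 \<omega> > x / t1 \<and> Z2 \<omega> > y / t2 \<and> \<bar>Z3 \<omega>\<bar> > u}"
      using pos by (auto simp: pos_divide_less_eq mult.commute)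
  qed measurable
  moreover have "{\<omega>\<in>space M. t1 * Z1 \<omega> > x \<and> t2 * Z2 \<omega> > y}
      = {\<omega>\<in>space M. Z1 \<omega> > x / t1 \<and> Z2 \<omega> > y / t2}"
    using pos by (auto simp: pos_divide_less_eq mult.commute)
  ultimately show ?thesis
    by simp
qed

lemma (in prob_space) indep_var_triple_measurable:
  fixes Z1 Z2 Z3 :: "'a \<Rightarrow> real"
  assumes "indep_var S T (borel \<Otimes>\<^sub>M borel \<Otimes>\<^sub>M borel) (\<lambda>\<omega>. (Z1 \<omega>, Z2 \<omega>, Z3 \<omega>))"
  shows "Z1 \<in> borel_measurable M" "Z2 \<in> borel_measurable M" "Z3 \<in> borel_measurable M"
  using indep_var_rv2[OF assms] by (simp_all add: measurable_pair_iff o_def)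

lemma (in prob_space) scale_mixture_tail_le:
  fixes T1 T2 T3 Z1 Z2 Z3 :: "'a \<Rightarrow> real"
  assumes ind: "indep_var (borel \<Otimes>\<^sub>M borel \<Otimes>\<^sub>M borel) (\<lambda>\<omega>. (T1 \<omega>, T2 \<omega>, T3 \<omega>))
      (borel \<Otimes>\<^sub>M borel \<Otimes>\<^sub>M borel) (\<lambda>\<omega>. (Z1 \<omega>, Z2 \<omega>, Z3 \<omega>))"
    and bounded: "AE \<omega> in M. 0 \<le> T1 \<omega> \<and> T1 \<omega> \<le> B \<and> 0 \<le> T2 \<omega> \<and> T2 \<omega> \<le> B \<and> T3 \<omega> \<le> B"
    and B: "0 < B" and c: "0 \<le> c"
    and tail_le: "\<And>v w. N \<le> v \<Longrightarrow> N \<le> w \<Longrightarrow>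
      prob {\<omega>\<in>space M. Z1 \<omega> > v \<and> Z2 \<omega> > w \<and> \<bar>Z3 \<omega>\<bar> > u}
        \<le> c * prob {\<omega>\<in>space M. Z1 \<omega> > v \<and> Z2 \<omega> > w}"
    and x: "N * B \<le> x" "0 < x" and y: "N * B \<le> y" "0 < y" and z: "B * u \<le> z"
  shows "prob {\<omega>\<in>space M. T1 \<omega> * Z1 \<omega> > x \<and> T2 \<omega> * Z2 \<omega> > y \<and> T3 \<omega> * \<bar>Z3 \<omega>\<bar> > z}
    \<le> c * prob {\<omega>\<in>space M. T1 \<omega> * Z1 \<omega> > x \<and> T2 \<omega> * Z2 \<omega> > y}"
proof -
  let ?M3 = "borel \<Otimes>\<^sub>M borel \<Otimes>\<^sub>M borel :: (real \<times> real \<times> real) measure"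
  define E where "E = {p \<in> space (?M3 \<Otimes>\<^sub>M ?M3).
    fst (fst p) * fst (snd p) > x \<and> fst (snd (fst p)) * fst (snd (snd p)) > y}"
  define F where "F = {p \<in> E. snd (snd (fst p)) * \<bar>snd (snd (snd p))\<bar> > z}"
  note [measurable] = indep_var_triple_measurable[OF ind]
  have E: "E \<in> sets (?M3 \<Otimes>\<^sub>M ?M3)" unfolding E_def by measurable
  have F: "F \<in> sets (?M3 \<Otimes>\<^sub>M ?M3)" unfolding F_def E_def by measurable
  have "AE t in distr M ?M3 (\<lambda>\<omega>. (T1 \<omega>, T2 \<omega>, T3 \<omega>)).
      0 \<le> fst t \<and> fst t \<le> B \<and> 0 \<le> fst (snd t) \<and> fst (snd t) \<le> B \<and> snd (snd t) \<le> B"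
    using bounded indep_var_rv1[OF ind] by (subst AE_distr_iff) auto
  then have "AE t in distr M ?M3 (\<lambda>\<omega>. (T1 \<omega>, T2 \<omega>, T3 \<omega>)).
      prob {\<omega>\<in>space M. (t, Z1 \<omega>, Z2 \<omega>, Z3 \<omega>) \<in> F} \<le> c * prob {\<omega>\<in>space M. (t, Z1 \<omega>, Z2 \<omega>, Z3 \<omega>) \<in> E}"
  proof eventually_elim
    case (elim t)
    with fixed_scale_tail_le[OF _ _ _ tail_le B c _ _ _ _ _ x y z]
    show ?case
      by (auto simp: E_def F_def space_pair_measure conj_commute conj_left_commute)
  qed
  with ind E F c have "prob {\<omega>\<in>space M. ((T1 \<omega>, T2 \<omega>, T3 \<omega>), Z1 \<omega>, Z2 \<omega>, Z3 \<omega>) \<in> F}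
      \<le> c * prob {\<omega>\<in>space M. ((T1 \<omega>, T2 \<omega>, T3 \<omega>), Z1 \<omega>, Z2 \<omega>, Z3 \<omega>) \<in> E}"
    by (rule indep_var_measure_le_cmult)
  then show ?thesis
    by (simp add: F_def E_def space_pair_measure conj_commute conj_left_commute)
qed

lemma eventually_prod3_same:
  assumes "eventually P (F \<times>\<^sub>F F \<times>\<^sub>F F)"
  shows "\<exists>Q. eventually Q F \<and> (\<forall>u v w. Q u \<longrightarrow> Q v \<longrightarrow> Q w \<longrightarrow> P (u, v, w))"
proof -
  obtain Pu Pvw where "eventually Pu F" "eventually Pvw (F \<times>\<^sub>F F)"
    and "\<forall>u vw. Pu u \<longrightarrow> Pvw vw \<longrightarrow> P (u, vw)"
    using assms unfolding eventually_prod_filter by blast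
  moreover obtain Q where "eventually Q F" "\<forall>v w. Q v \<longrightarrow> Q w \<longrightarrow> Pvw (v, w)"
    using \<open>eventually Pvw (F \<times>\<^sub>F F)\<close> unfolding eventually_prod_same by blast
  ultimately show ?thesis
    by (intro exI[of _ "\<lambda>u. Pu u \<and> Q u"]) (auto intro: eventually_conj)
qed

lemma eventually_at_top_prod3_linorder:
  fixes P :: "'b::linorder \<times> 'b \<times> 'b \<Rightarrow> bool"
  assumes "eventually P (at_top \<times>\<^sub>F at_top \<times>\<^sub>F at_top)"
  obtains N where "\<And>u v w. N \<le> u \<Longrightarrow> N \<le> v \<Longrightarrow> N \<le> w \<Longrightarrow> P (u, v, w)"
  using eventually_prod3_same[OF assms] unfolding eventually_at_top_linorder by blast

lemma (in finite_measure) measure_Int_le_if_cprob_le: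
  assumes "B \<in> sets M" and "cprob M A B \<le> c" and "0 \<le> c"
  shows "measure M (A \<inter> B) \<le> c * measure M B"
proof (cases "measure M B = 0")
  case True
  have "measure M (A \<inter> B) \<le> measure M B"
    using assms(1) by (intro finite_measure_mono) auto
  with True assms(3) show ?thesis by simp
next
  case False
  then have "0 < measure M B" by (simp add: zero_less_measure_iff)
  with assms(2) show ?thesis by (simp add: cprob_def divide_le_eq mult.commute)
qed

lemma (in prob_space) scale_mixture_tail_negligible:
  fixes T1 T2 T3 Z1 Z2 Z3 :: "'a \<Rightarrow> real" and a :: "real \<Rightarrow> real"
  assumes ind: "indep_var (borel \<Otimes>\<^sub>M borel \<Otimes>\<^sub>M borel) (\<lambda>\<omega>. (T1 \<omega>, T2 \<omega>, T3 \<omega>))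
      (borel \<Otimes>\<^sub>M borel \<Otimes>\<^sub>M borel) (\<lambda>\<omega>. (Z1 \<omega>, Z2 \<omega>, Z3 \<omega>))"
    and bounded: "AE \<omega> in M. 0 \<le> T1 \<omega> \<and> T1 \<omega> \<le> B \<and> 0 \<le> T2 \<omega> \<and> T2 \<omega> \<le> B \<and> T3 \<omega> \<le> B"
    and B: "0 < B"
    and cond_tail: "((\<lambda>(u, v, w). cprob M {\<omega>\<in>space M. \<bar>Z3 \<omega>\<bar> > u} {\<omega>\<in>space M. Z1 \<omega> > v \<and> Z2 \<omega> > w})
      \<longlongrightarrow> 0) (at_top \<times>\<^sub>F at_top \<times>\<^sub>F at_top)"
    and a: "filterlim a at_top at_top"
  shows "(\<lambda>(x, y). prob {\<omega>\<in>space M. T1 \<omega> * Z1 \<omega> > x \<and> T2 \<omega> * Z2 \<omega> > y \<and> T3 \<omega> * \<bar>Z3 \<omega>\<bar> > a x})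
    \<in> o[at_top \<times>\<^sub>F at_top](\<lambda>(x, y). prob {\<omega>\<in>space M. T1 \<omega> * Z1 \<omega> > x \<and> T2 \<omega> * Z2 \<omega> > y})"
proof (rule landau_o.smallI)
  fix c :: real assume c: "0 < c"
  note [measurable] = indep_var_triple_measurable[OF ind]
  obtain N where N: "\<And>u v w. N \<le> u \<Longrightarrow> N \<le> v \<Longrightarrow> N \<le> w \<Longrightarrow>
      \<bar>cprob M {\<omega>\<in>space M. \<bar>Z3 \<omega>\<bar> > u} {\<omega>\<in>space M. Z1 \<omega> > v \<and> Z2 \<omega> > w}\<bar> < c"
    using tendstoD[OF cond_tail c] by (rule eventually_at_top_prod3_linorder) auto
  have tail_le: "prob {\<omega>\<in>space M. Z1 \<omega> > v \<and> Z2 \<omega> > w \<and> \<bar>Z3 \<omega>\<bar> > u}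
      \<le> c * prob {\<omega>\<in>space M. Z1 \<omega> > v \<and> Z2 \<omega> > w}"
    if "N \<le> u" "N \<le> v" "N \<le> w" for u v w
  proof -
    have "prob ({\<omega>\<in>space M. \<bar>Z3 \<omega>\<bar> > u} \<inter> {\<omega>\<in>space M. Z1 \<omega> > v \<and> Z2 \<omega> > w})
        \<le> c * prob {\<omega>\<in>space M. Z1 \<omega> > v \<and> Z2 \<omega> > w}"
      using N[OF that] c by (intro measure_Int_le_if_cprob_le) auto
    then show ?thesis
      by (simp add: Int_def conj_commute conj_left_commute)
  qed
  obtain x0 where x0: "\<And>x. x0 \<le> x \<Longrightarrow> B * N \<le> a x"
    using a unfolding filterlim_at_top eventually_at_top_linorder by blast
  have "eventually (\<lambda>x. max x0 (max (N * B) 1) \<le> x) at_top"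
    "eventually (\<lambda>y. max (N * B) 1 \<le> y) at_top"
    by (rule eventually_ge_at_top)+
  then have "eventually (\<lambda>(x, y). max x0 (max (N * B) 1) \<le> x \<and> max (N * B) 1 \<le> y) (at_top \<times>\<^sub>F at_top)"
    unfolding case_prod_unfold by (rule eventually_prodI)
  then show "eventually (\<lambda>p. norm ((\<lambda>(x, y). prob {\<omega>\<in>space M. T1 \<omega> * Z1 \<omega> > x \<and> T2 \<omega> * Z2 \<omega> > y \<and> T3 \<omega> * \<bar>Z3 \<omega>\<bar> > a x}) p)
      \<le> c * norm ((\<lambda>(x, y). prob {\<omega>\<in>space M. T1 \<omega> * Z1 \<omega> > x \<and> T2 \<omega> * Z2 \<omega> > y}) p)) (at_top \<times>\<^sub>F at_top)"
  proof (rule eventually_mono, clarify)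
    fix x y assume "max x0 (max (N * B) 1) \<le> x" "max (N * B) 1 \<le> y"
    then have "prob {\<omega>\<in>space M. T1 \<omega> * Z1 \<omega> > x \<and> T2 \<omega> * Z2 \<omega> > y \<and> T3 \<omega> * \<bar>Z3 \<omega>\<bar> > a x}
        \<le> c * prob {\<omega>\<in>space M. T1 \<omega> * Z1 \<omega> > x \<and> T2 \<omega> * Z2 \<omega> > y}"
      using c x0 by (intro scale_mixture_tail_le[OF ind bounded B _ tail_le]) auto
    then show "norm (prob {\<omega>\<in>space M. T1 \<omega> * Z1 \<omega> > x \<and> T2 \<omega> * Z2 \<omega> > y \<and> T3 \<omega> * \<bar>Z3 \<omega>\<bar> > a x})
        \<le> c * norm (prob {\<omega>\<in>space M. T1 \<omega> * Z1 \<omega> > x \<and> T2 \<omega> * Z2 \<omega> > y})"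
      by simp
  qed
qed

lemma (in prob_space) indep_var_coordinates:
  fixes A B X Y :: "'i \<Rightarrow> 'a \<Rightarrow> real"
  assumes ind: "indep_var
      (Pi\<^sub>M I (\<lambda>_. borel) \<Otimes>\<^sub>M Pi\<^sub>M J (\<lambda>_. borel)) (\<lambda>\<omega>. (restrict (\<lambda>i. A i \<omega>) I, restrict (\<lambda>j. B j \<omega>) J))
      (Pi\<^sub>M I (\<lambda>_. borel) \<Otimes>\<^sub>M Pi\<^sub>M J (\<lambda>_. borel)) (\<lambda>\<omega>. (restrict (\<lambda>i. X i \<omega>) I, restrict (\<lambda>j. Y j \<omega>) J))"
    and i: "i \<in> I" and k: "k \<in> I" and j: "j \<in> J"
  shows "indep_var (borel \<Otimes>\<^sub>M borel \<Otimes>\<^sub>M borel) (\<lambda>\<omega>. (A i \<omega>, B j \<omega>, A k \<omega>))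
    (borel \<Otimes>\<^sub>M borel \<Otimes>\<^sub>M borel) (\<lambda>\<omega>. (X i \<omega>, Y j \<omega>, X k \<omega>))"
proof -
  define select :: "('i \<Rightarrow> real) \<times> ('i \<Rightarrow> real) \<Rightarrow> real \<times> real \<times> real"
    where "select = (\<lambda>(f, g). (f i, g j, f k))"
  have "select \<in> Pi\<^sub>M I (\<lambda>_. borel) \<Otimes>\<^sub>M Pi\<^sub>M J (\<lambda>_. borel) \<rightarrow>\<^sub>M borel \<Otimes>\<^sub>M borel \<Otimes>\<^sub>M borel"
    unfolding select_def using i j k by measurable
  from indep_var_compose[OF ind this this] show ?thesis
    using i j k by (simp add: select_def o_def)
qed

theorem lemma2p2:
  fixes M :: "'a measure" and n m :: nat
    and X Y Theta Delta :: "nat \<Rightarrow> 'a \<Rightarrow> real"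
    and C :: "nat \<Rightarrow> real" and a :: "real \<Rightarrow> real"
  assumes M: "prob_space M"
    and X_rv: "\<And>i. i \<in> {1..n} \<Longrightarrow> X i \<in> borel_measurable M"
    and Y_rv: "\<And>j. j \<in> {1..m} \<Longrightarrow> Y j \<in> borel_measurable M"
    and Th_rv: "\<And>i. i \<in> {1..n} \<Longrightarrow> Theta i \<in> borel_measurable M"
    and De_rv: "\<And>j. j \<in> {1..m} \<Longrightarrow> Delta j \<in> borel_measurable M"
    \<comment> \<open>(A1)\<close>
    and gtai: "GTAI M n X m Y"
    and Th_nonneg: "\<And>i. i \<in> {1..n} \<Longrightarrow> \<forall>\<omega>\<in>space M. Theta i \<omega> \<ge> 0"
    and De_nonneg: "\<And>j. j \<in> {1..m} \<Longrightarrow> \<forall>\<omega>\<in>space M. Delta j \<omega> \<ge> 0"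
    and Th_nondeg: "\<And>i. i \<in> {1..n} \<Longrightarrow> measure M {\<omega>\<in>space M. Theta i \<omega> = 0} < 1"
    and De_nondeg: "\<And>j. j \<in> {1..m} \<Longrightarrow> measure M {\<omega>\<in>space M. Delta j \<omega> = 0} < 1"
    and Th_bdd: "\<And>i. i \<in> {1..n} \<Longrightarrow> \<exists>b. measure M {\<omega>\<in>space M. Theta i \<omega> \<le> b} = 1"
    and De_bdd: "\<And>j. j \<in> {1..m} \<Longrightarrow> \<exists>b. measure M {\<omega>\<in>space M. Delta j \<omega> \<le> b} = 1"
    and indep: "prob_space.indep_var M
        (Pi\<^sub>M {1..n} (\<lambda>_. borel) \<Otimes>\<^sub>M Pi\<^sub>M {1..m} (\<lambda>_. borel))
        (\<lambda>\<omega>. (restrict (\<lambda>i. Theta i \<omega>) {1..n}, restrict (\<lambda>j. Delta j \<omega>) {1..m}))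
        (Pi\<^sub>M {1..n} (\<lambda>_. borel) \<Otimes>\<^sub>M Pi\<^sub>M {1..m} (\<lambda>_. borel))
        (\<lambda>\<omega>. (restrict (\<lambda>i. X i \<omega>) {1..n}, restrict (\<lambda>j. Y j \<omega>) {1..m}))"
    \<comment> \<open>(A2)\<close>
    and F_class: "\<And>i. i \<in> {1..n} \<Longrightarrow> inf_right_endpoint (distr M borel (X i)) \<and>
        dominated_variation (distr M borel (X i)) \<and> long_tailed (distr M borel (X i))"
    and G_class: "\<And>j. j \<in> {1..m} \<Longrightarrow> inf_right_endpoint (distr M borel (Y j)) \<and>
        dominated_variation (distr M borel (Y j)) \<and> long_tailed (distr M borel (Y j))"
    and sai: "\<And>i. i \<in> {1..min n m} \<Longrightarrow> SAI M (X i) (Y i) (C i)"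
    and indep_XY: "\<And>i j. i \<in> {1..n} \<Longrightarrow> j \<in> {1..m} \<Longrightarrow> i \<noteq> j \<Longrightarrow>
        prob_space.indep_var M borel (X i) borel (Y j)"
    \<comment> \<open>the function a\<close>
    and a_pos: "\<And>x. x \<ge> 0 \<Longrightarrow> a x > 0"
    and a_lim: "filterlim a at_top at_top"
    and a_small: "a \<in> o[at_top](\<lambda>x. x)"
  shows "\<forall>i\<in>{1..n}. \<forall>k\<in>{1..n}. \<forall>j\<in>{1..m}. i \<noteq> k \<longrightarrow>
     (\<lambda>(x,y). measure M {\<omega>\<in>space M. Theta i \<omega> * X i \<omega> > x \<and> Delta j \<omega> * Y j \<omega> > y
                                    \<and> Theta k \<omega> * \<bar>X k \<omega>\<bar> > a x})
       \<in> o[at_top \<times>\<^sub>F at_top](\<lambda>(x,y). measure M {\<omega>\<in>space M. Theta i \<omega> * X i \<omega> > x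
                                                      \<and> Delta j \<omega> * Y j \<omega> > y})"
proof (intro ballI impI)
  fix i k j assume i: "i \<in> {1..n}" and k: "k \<in> {1..n}" and j: "j \<in> {1..m}" and "i \<noteq> k"
  interpret prob_space M by (rule M)
  obtain bi bk bj where bi: "prob {\<omega>\<in>space M. Theta i \<omega> \<le> bi} = 1"
      and bk: "prob {\<omega>\<in>space M. Theta k \<omega> \<le> bk} = 1" and bj: "prob {\<omega>\<in>space M. Delta j \<omega> \<le> bj} = 1"
    using Th_bdd[OF i] Th_bdd[OF k] De_bdd[OF j] by blast
  define B where "B = max 1 (max bi (max bj bk))"
  have "AE \<omega> in M. 0 \<le> Theta i \<omega> \<and> 0 \<le> Delta j \<omega>"
    using Th_nonneg[OF i] De_nonneg[OF j] by (auto intro: AE_I2)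
  with AE_prob_1[OF bi] AE_prob_1[OF bk] AE_prob_1[OF bj]
  have bounded: "AE \<omega> in M. 0 \<le> Theta i \<omega> \<and> Theta i \<omega> \<le> B \<and> 0 \<le> Delta j \<omega> \<and> Delta j \<omega> \<le> B
      \<and> Theta k \<omega> \<le> B"
    unfolding B_def by eventually_elim auto
  have cond_tail: "((\<lambda>(u, v, w). cprob M {\<omega>\<in>space M. \<bar>X k \<omega>\<bar> > u} {\<omega>\<in>space M. X i \<omega> > v \<and> Y j \<omega> > w})
      \<longlongrightarrow> 0) (at_top \<times>\<^sub>F at_top \<times>\<^sub>F at_top)"
    using gtai i j k \<open>i \<noteq> k\<close> unfolding GTAI_def by (elim conjE) simp
  have "0 < B" by (simp add: B_def)
  from scale_mixture_tail_negligible[OF indep_var_coordinates[OF indep i k j] bounded this cond_tail a_lim]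
  show "(\<lambda>(x,y). prob {\<omega>\<in>space M. Theta i \<omega> * X i \<omega> > x \<and> Delta j \<omega> * Y j \<omega> > y
      \<and> Theta k \<omega> * \<bar>X k \<omega>\<bar> > a x})
    \<in> o[at_top \<times>\<^sub>F at_top](\<lambda>(x,y). prob {\<omega>\<in>space M. Theta i \<omega> * X i \<omega> > x \<and> Delta j \<omega> * Y j \<omega> > y})" .
qed

end
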